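(* Let $M(C,\bar\xi,\pi)$ be a Myller configuration with Darboux frame $(\bar\xi,\bar\mu,\bar v)$ and invariants $G,K,T$, with $(T,K)\neq(0,0)$ everywhere. Then: (i) if $K\equiv0$, $C$ is a $\bar v$-helix iff $\sigma_v=\mp G/T$ is constant; (ii) if $G\equiv0$, $C$ is a $\bar v$-helix iff $\sigma_v=\mp\dfrac{T'K-TK'}{(T^2+K^2)^{3/2}}$ is constant; (iii) if $T\equiv0$, $C$ is a $\bar v$-helix iff $\sigma_v=\mp G/K$ is constant.
   Context: Let $C$ be a smooth curve in $E^3$ parametrized by arclength $s$; primes denote $d/ds$. A Myller configuration $M(C,\bar\xi,\pi)$ consists of a smooth unit vector field $\bar\xi$ along $C$ and a smooth oriented plane field $\pi$ with $\bar\xi\in\pi$; $\bar v$ is the unit normal of $\pi$, $\bar\mu=\bar v\times\bar\xi$, and $\bar\xi'=G\bar\mu+K\bar v$, $\bar\mu'=-G\bar\xi+T\bar v$, $\bar v'=-K\bar\xi-T\bar\mu$. $C$ is a $\bar v$-helix if $\langle\bar v,\bar d_v\rangle$ is constant along $C$ for some constant unit vector $\bar d_v$. *)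

theory Defs
  imports "HOL-Analysis.Analysis" "HOL-Analysis.Cross3"
begin

definition smooth_on :: "real set \<Rightarrow> (real \<Rightarrow> 'a::real_normed_vector) \<Rightarrow> bool" where
  "smooth_on I f \<longleftrightarrow>
     (\<exists>D :: nat \<Rightarrow> real \<Rightarrow> 'a. D 0 = f \<and>
        (\<forall>n. \<forall>s\<in>I. (D n has_vector_derivative D (Suc n) s) (at s)))"

text \<open>The oriented plane field pi is represented by its unit normal field v;
  mu = v x xi; G, K, T are the invariants given by the Darboux-type derivative formulas.\<close>
definition myller_configuration ::
  "real set \<Rightarrow> (real \<Rightarrow> real^3) \<Rightarrow> (real \<Rightarrow> real^3) \<Rightarrow> (real \<Rightarrow> real^3) \<Rightarrow> (real \<Rightarrow> real^3)
   \<Rightarrow> (real \<Rightarrow> real) \<Rightarrow> (real \<Rightarrow> real) \<Rightarrow> (real \<Rightarrow> real) \<Rightarrow> bool" where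
  "myller_configuration I C xi mu v G K T \<longleftrightarrow>
     open I \<and> is_interval I \<and> I \<noteq> {} \<and>
     smooth_on I C \<and> smooth_on I xi \<and> smooth_on I v \<and>
     (\<forall>s\<in>I.
        norm (vector_derivative C (at s)) = 1 \<and>
        norm (xi s) = 1 \<and> norm (v s) = 1 \<and> xi s \<bullet> v s = 0 \<and>
        mu s = cross3 (v s) (xi s) \<and>
        (xi has_vector_derivative (G s *\<^sub>R mu s + K s *\<^sub>R v s)) (at s) \<and>
        (mu has_vector_derivative (- G s *\<^sub>R xi s + T s *\<^sub>R v s)) (at s) \<and>
        (v has_vector_derivative (- K s *\<^sub>R xi s - T s *\<^sub>R mu s)) (at s))"

definition v_helix :: "real set \<Rightarrow> (real \<Rightarrow> real^3) \<Rightarrow> bool" where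
  "v_helix I v \<longleftrightarrow> (\<exists>d. norm d = 1 \<and> (\<exists>c. \<forall>s\<in>I. v s \<bullet> d = c))"

end

(*
  In each case one of G, K, T (geodesic curvature, normal curvature and geodesic torsion)
  vanishes, and the Darboux equations become the Frenet equations
  e1' = kappa e2, e2' = tau e3 - kappa e1, e3' = - tau e2 of a frame made of +-xi, +-mu and v,
  with v as binormal e3 if K = 0 or T = 0, and as principal normal e2 if G = 0.
  This reduces the statement to two classical facts: the binormal makes a constant angle with
  a fixed axis iff kappa/tau is constant (Lancret), and the principal normal does iff
  sigma = (tau' kappa - tau kappa') / (kappa^2 + tau^2)^(3/2) is constant (slant helices).
  Necessity comes from differentiating the coordinates e_i . d of the axis d.  For sufficiency
  the axis is written down and shown to have zero derivative: e1 + (kappa/tau) e3, resp.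
  sigma e2 + (tau e1 + kappa e3) / sqrt (kappa^2 + tau^2).
*)

theory Submission
  imports Defs
begin

lemma has_real_derivative_inner_left:
  fixes f :: "real \<Rightarrow> 'a::real_inner"
  assumes "(f has_vector_derivative f') (at s)"
  shows "((\<lambda>t. f t \<bullet> e) has_real_derivative f' \<bullet> e) (at s)"
  using has_derivative_inner_left[OF assms[unfolded has_vector_derivative_def], of e]
  by (simp add: has_field_derivative_def mult_commute_abs)

lemma has_real_derivative_inner:
  fixes f g :: "real \<Rightarrow> 'a::real_inner"
  assumes "(f has_vector_derivative f') (at s)" "(g has_vector_derivative g') (at s)"
  shows "((\<lambda>t. f t \<bullet> g t) has_real_derivative f s \<bullet> g' + f' \<bullet> g s) (at s)"
  unfolding has_field_derivative_def
  by (rule has_derivative_eq_rhs[OF has_derivative_inner[OF assms[unfolded has_vector_derivative_def]]])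
    (auto simp: algebra_simps)

lemma has_real_derivative_zero_if_constant_on:
  assumes "open I" "s \<in> I" "g constant_on I" "(g has_real_derivative D) (at s)"
  shows "D = 0"
proof -
  obtain c where "\<forall>t\<in>I. g t = c"
    using assms(3) unfolding constant_on_def by blast
  then have "((\<lambda>t. c) has_real_derivative D) (at s)"
    using has_field_derivative_transform_within_open[OF assms(4) assms(1,2)] by simp
  then show ?thesis
    using DERIV_const DERIV_unique by blast
qed

lemma constant_on_if_inner_constant_on:
  fixes F :: "'a \<Rightarrow> 'b::real_inner"
  assumes "\<And>e. (\<lambda>t. F t \<bullet> e) constant_on I"
  shows "F constant_on I"
proof -
  have "F s = F s'" if "s \<in> I" "s' \<in> I" for s s'
  proof -
    have "F s \<bullet> (F s - F s') = F s' \<bullet> (F s - F s')"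
      using assms[of "F s - F s'"] that unfolding constant_on_def by metis
    then have "(F s - F s') \<bullet> (F s - F s') = 0"
      by (simp add: inner_diff_left)
    then show ?thesis
      by simp
  qed
  then show ?thesis
    unfolding constant_on_def by metis
qed

lemma orthonormal_triple_eq_0:
  fixes a b c x :: "'a::euclidean_space"
  assumes "DIM('a) = 3"
    and "norm a = 1" "norm b = 1" "norm c = 1" "a \<bullet> b = 0" "a \<bullet> c = 0" "b \<bullet> c = 0"
    and "x \<bullet> a = 0" "x \<bullet> b = 0" "x \<bullet> c = 0"
  shows "x = 0"
proof -
  have distinct: "a \<noteq> b" "a \<noteq> c" "b \<noteq> c"
    using assms(2-7) by (auto simp: norm_eq_sqrt_inner)
  have "pairwise orthogonal {a, b, c}"
    using assms(5-7) by (auto simp: pairwise_def orthogonal_def inner_commute)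
  moreover have "0 \<notin> {a, b, c}"
    using assms(2-4) by auto
  ultimately have "independent {a, b, c}"
    by (rule pairwise_orthogonal_independent)
  moreover have "dim (UNIV :: 'a set) \<le> card {a, b, c}"
  proof -
    have "card {a, b, c} = 3"
      using distinct by simp
    then show ?thesis
      using assms(1) by (simp only: dim_UNIV)
  qed
  ultimately have "x \<in> span {a, b, c}"
    using card_ge_dim_independent[of "{a, b, c}" UNIV] by blast
  then have "orthogonal x x"
    by (rule orthogonal_to_span) (use assms(8-10) in \<open>auto simp: orthogonal_def\<close>)
  then show ?thesis
    by (simp add: orthogonal_def)
qed

lemma v_helix_iff_constant_on:
  "v_helix I v \<longleftrightarrow> (\<exists>d. d \<noteq> 0 \<and> (\<lambda>s. v s \<bullet> d) constant_on I)"
proof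
  assume "v_helix I v"
  then obtain d c where "norm d = 1" "\<forall>s\<in>I. v s \<bullet> d = c"
    unfolding v_helix_def by blast
  then show "\<exists>d. d \<noteq> 0 \<and> (\<lambda>s. v s \<bullet> d) constant_on I"
    unfolding constant_on_def by (metis norm_zero zero_neq_one)
next
  assume "\<exists>d. d \<noteq> 0 \<and> (\<lambda>s. v s \<bullet> d) constant_on I"
  then obtain d c where "d \<noteq> 0" "\<forall>s\<in>I. v s \<bullet> d = c"
    unfolding constant_on_def by blast
  then have "norm (d /\<^sub>R norm d) = 1" "\<forall>s\<in>I. v s \<bullet> (d /\<^sub>R norm d) = c / norm d"
    by (simp_all add: divide_inverse)
  then show "v_helix I v"
    unfolding v_helix_def by blast
qed

lemma has_real_derivative_sqrt_sum_squares:
  assumes "(f has_real_derivative f') (at s)" "(g has_real_derivative g') (at s)"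
    and "f s ^ 2 + g s ^ 2 > 0"
  shows "((\<lambda>t. sqrt (f t ^ 2 + g t ^ 2)) has_real_derivative
           (f s * f' + g s * g') / sqrt (f s ^ 2 + g s ^ 2)) (at s)"
proof -
  have "((\<lambda>t. f t ^ 2 + g t ^ 2) has_real_derivative 2 * (f s * f' + g s * g')) (at s)"
    using assms(1,2) by (auto intro!: derivative_eq_intros simp: power2_eq_square)
  note chain = DERIV_chain2[OF DERIV_real_sqrt[OF assms(3)] this]
  have "inverse r / 2 * (2 * x) = x / r" for r x :: real
    by (simp add: inverse_eq_divide)
  then show ?thesis
    using chain by (simp only:)
qed

lemma powr_three_halves:
  fixes x :: real
  assumes "x \<ge> 0"
  shows "x powr (3/2) = x * sqrt x"
proof -
  have "x powr (1 + 1/2) = x powr 1 * x powr (1/2)"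
    by (rule powr_add)
  then show ?thesis
    using assms by (simp add: powr_half_sqrt)
qed

lemma constant_on_uminus_iff:
  fixes f :: "'a \<Rightarrow> 'b::group_add"
  shows "(\<lambda>x. - f x) constant_on A \<longleftrightarrow> f constant_on A"
  unfolding constant_on_def by (metis minus_minus)

locale frenet_frame =
  fixes I :: "real set" and e1 e2 e3 :: "real \<Rightarrow> real^3" and \<kappa> \<tau> :: "real \<Rightarrow> real"
  assumes open_I: "open I" and connected_I: "connected I" and nonempty_I: "I \<noteq> {}"
    and orthonormal: "\<And>s. s \<in> I \<Longrightarrow>
      norm (e1 s) = 1 \<and> norm (e2 s) = 1 \<and> norm (e3 s) = 1 \<and>
      e1 s \<bullet> e2 s = 0 \<and> e1 s \<bullet> e3 s = 0 \<and> e2 s \<bullet> e3 s = 0"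
    and has_vector_derivative_e1: "\<And>s. s \<in> I \<Longrightarrow> (e1 has_vector_derivative \<kappa> s *\<^sub>R e2 s) (at s)"
    and has_vector_derivative_e2:
      "\<And>s. s \<in> I \<Longrightarrow> (e2 has_vector_derivative \<tau> s *\<^sub>R e3 s - \<kappa> s *\<^sub>R e1 s) (at s)"
    and has_vector_derivative_e3: "\<And>s. s \<in> I \<Longrightarrow> (e3 has_vector_derivative - \<tau> s *\<^sub>R e2 s) (at s)"
begin

lemma inner_frame:
  assumes "s \<in> I"
  shows "e1 s \<bullet> e1 s = 1" "e2 s \<bullet> e2 s = 1" "e3 s \<bullet> e3 s = 1"
    "e1 s \<bullet> e2 s = 0" "e1 s \<bullet> e3 s = 0" "e2 s \<bullet> e3 s = 0"
    "e2 s \<bullet> e1 s = 0" "e3 s \<bullet> e1 s = 0" "e3 s \<bullet> e2 s = 0"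
  using orthonormal[OF assms] by (simp_all add: dot_square_norm inner_commute)

lemma frame_coordinates_eq_0:
  assumes "s \<in> I" "e1 s \<bullet> d = 0" "e2 s \<bullet> d = 0" "e3 s \<bullet> d = 0"
  shows "d = 0"
  using orthonormal_triple_eq_0[of "e1 s" "e2 s" "e3 s" d] orthonormal[OF assms(1)] assms(2-4)
  by (simp add: inner_commute)

lemma has_real_derivative_frame_coordinates:
  assumes "s \<in> I"
  shows "((\<lambda>t. e1 t \<bullet> d) has_real_derivative \<kappa> s * (e2 s \<bullet> d)) (at s)"
    and "((\<lambda>t. e2 t \<bullet> d) has_real_derivative \<tau> s * (e3 s \<bullet> d) - \<kappa> s * (e1 s \<bullet> d)) (at s)"
    and "((\<lambda>t. e3 t \<bullet> d) has_real_derivative - \<tau> s * (e2 s \<bullet> d)) (at s)"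
  using has_real_derivative_inner_left[OF has_vector_derivative_e1[OF assms], of d]
    has_real_derivative_inner_left[OF has_vector_derivative_e2[OF assms], of d]
    has_real_derivative_inner_left[OF has_vector_derivative_e3[OF assms], of d]
  by (simp_all add: inner_diff_left)

lemma constant_on_if_has_real_derivative_0:
  assumes "\<And>s. s \<in> I \<Longrightarrow> (f has_real_derivative 0) (at s)"
  shows "f constant_on I"
  using has_field_derivative_0_imp_constant_on[OF assms connected_I open_I] by simp

lemma constant_on_if_v_helix_binormal:
  assumes \<tau>_nonzero: "\<And>s. s \<in> I \<Longrightarrow> \<tau> s \<noteq> 0"
    and "v_helix I e3"
  shows "(\<lambda>s. \<kappa> s / \<tau> s) constant_on I"
proof -
  obtain d c where "d \<noteq> 0" and c: "\<And>s. s \<in> I \<Longrightarrow> e3 s \<bullet> d = c"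
    using assms(2) unfolding v_helix_iff_constant_on constant_on_def by blast
  have e2_d: "e2 s \<bullet> d = 0" if "s \<in> I" for s
    using has_real_derivative_zero_if_constant_on[OF open_I that _
        has_real_derivative_frame_coordinates(3)[OF that]] c \<tau>_nonzero[OF that]
    unfolding constant_on_def by auto
  have e1_d: "\<kappa> s * (e1 s \<bullet> d) = \<tau> s * c" if "s \<in> I" for s
    using has_real_derivative_zero_if_constant_on[OF open_I that _
        has_real_derivative_frame_coordinates(2)[OF that]] c[OF that] e2_d
    unfolding constant_on_def by force
  have "(\<lambda>s. e1 s \<bullet> d) constant_on I"
  proof (rule constant_on_if_has_real_derivative_0)
    fix s assume "s \<in> I"
    then show "((\<lambda>t. e1 t \<bullet> d) has_real_derivative 0) (at s)"
      using has_real_derivative_frame_coordinates(1)[of s d] e2_d by simp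
  qed
  then obtain a where a: "\<And>s. s \<in> I \<Longrightarrow> e1 s \<bullet> d = a"
    unfolding constant_on_def by blast
  have "\<kappa> s / \<tau> s = c / a" if "s \<in> I" for s
  proof -
    have "a \<noteq> 0"
      using e1_d[OF that] a[OF that] c[OF that] e2_d[OF that] \<tau>_nonzero[OF that] \<open>d \<noteq> 0\<close>
        frame_coordinates_eq_0[OF that]
      by auto
    then show ?thesis
      using e1_d[OF that] a[OF that] \<tau>_nonzero[OF that] by (simp add: field_simps)
  qed
  then show ?thesis
    unfolding constant_on_def by blast
qed

lemma v_helix_binormal_if_constant_on:
  assumes \<tau>_nonzero: "\<And>s. s \<in> I \<Longrightarrow> \<tau> s \<noteq> 0"
    and "(\<lambda>s. \<kappa> s / \<tau> s) constant_on I"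
  shows "v_helix I e3"
proof -
  obtain k where k: "\<And>s. s \<in> I \<Longrightarrow> \<kappa> s = k * \<tau> s"
    using assms(2) \<tau>_nonzero unfolding constant_on_def by (metis nonzero_eq_divide_eq)
  define F where "F t = e1 t + k *\<^sub>R e3 t" for t
  have "F constant_on I"
  proof (rule constant_on_if_inner_constant_on)
    fix e
    have "((\<lambda>t. F t \<bullet> e) has_real_derivative 0) (at s)" if "s \<in> I" for s
    proof -
      have "((\<lambda>t. e1 t \<bullet> e + k * (e3 t \<bullet> e)) has_real_derivative
              \<kappa> s * (e2 s \<bullet> e) + k * (- \<tau> s * (e2 s \<bullet> e))) (at s)"
        using that by (intro DERIV_add DERIV_cmult has_real_derivative_frame_coordinates)
      then show ?thesis
        using k[OF that] by (simp add: F_def inner_add_left)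
    qed
    then show "(\<lambda>t. F t \<bullet> e) constant_on I"
      by (rule constant_on_if_has_real_derivative_0)
  qed
  then obtain d where d: "\<And>s. s \<in> I \<Longrightarrow> F s = d"
    unfolding constant_on_def by blast
  obtain s0 where "s0 \<in> I"
    using nonempty_I by blast
  then have "e1 s0 \<bullet> d = 1"
    using d[of s0, symmetric] inner_frame[of s0] by (simp add: F_def inner_add_right)
  then have "d \<noteq> 0"
    by auto
  moreover have "e3 s \<bullet> d = k" if "s \<in> I" for s
    using d[OF that, symmetric] inner_frame[OF that] by (simp add: F_def inner_add_right)
  ultimately show ?thesis
    unfolding v_helix_iff_constant_on constant_on_def by blast
qed

theorem v_helix_binormal_iff:
  "(\<And>s. s \<in> I \<Longrightarrow> \<tau> s \<noteq> 0) \<Longrightarrow> v_helix I e3 \<longleftrightarrow> (\<lambda>s. \<kappa> s / \<tau> s) constant_on I"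
  using constant_on_if_v_helix_binormal v_helix_binormal_if_constant_on by blast

context
  fixes \<kappa>' \<tau>' :: "real \<Rightarrow> real"
  assumes nondegenerate: "\<And>s. s \<in> I \<Longrightarrow> (\<kappa> s, \<tau> s) \<noteq> (0, 0)"
    and has_real_derivative_\<kappa>: "\<And>s. s \<in> I \<Longrightarrow> (\<kappa> has_real_derivative \<kappa>' s) (at s)"
    and has_real_derivative_\<tau>: "\<And>s. s \<in> I \<Longrightarrow> (\<tau> has_real_derivative \<tau>' s) (at s)"
begin

lemma sum_squares_curvatures_pos: "s \<in> I \<Longrightarrow> \<kappa> s ^ 2 + \<tau> s ^ 2 > 0"
  using nondegenerate by (simp add: sum_power2_gt_zero_iff)

lemma has_real_derivative_norm_curvatures:
  "s \<in> I \<Longrightarrow> ((\<lambda>t. sqrt (\<kappa> t ^ 2 + \<tau> t ^ 2)) has_real_derivative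
      (\<kappa> s * \<kappa>' s + \<tau> s * \<tau>' s) / sqrt (\<kappa> s ^ 2 + \<tau> s ^ 2)) (at s)"
  by (intro has_real_derivative_sqrt_sum_squares has_real_derivative_\<kappa> has_real_derivative_\<tau>
      sum_squares_curvatures_pos)

lemma principal_normal_axis_coordinates:
  assumes c: "\<And>s. s \<in> I \<Longrightarrow> e2 s \<bullet> d = c" and s: "s \<in> I"
  shows "(e1 s \<bullet> d) * (\<kappa> s ^ 2 + \<tau> s ^ 2) = \<tau> s * (\<tau> s * (e1 s \<bullet> d) + \<kappa> s * (e3 s \<bullet> d))"
    and "(e3 s \<bullet> d) * (\<kappa> s ^ 2 + \<tau> s ^ 2) = \<kappa> s * (\<tau> s * (e1 s \<bullet> d) + \<kappa> s * (e3 s \<bullet> d))"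
    and "\<tau>' s * (e3 s \<bullet> d) - \<kappa>' s * (e1 s \<bullet> d) = (\<kappa> s ^ 2 + \<tau> s ^ 2) * c"
proof -
  have h0: "\<tau> t * (e3 t \<bullet> d) = \<kappa> t * (e1 t \<bullet> d)" if "t \<in> I" for t
    using has_real_derivative_zero_if_constant_on[OF open_I that _
        has_real_derivative_frame_coordinates(2)[OF that]] c
    unfolding constant_on_def by force
  then show "(e1 s \<bullet> d) * (\<kappa> s ^ 2 + \<tau> s ^ 2) = \<tau> s * (\<tau> s * (e1 s \<bullet> d) + \<kappa> s * (e3 s \<bullet> d))"
    "(e3 s \<bullet> d) * (\<kappa> s ^ 2 + \<tau> s ^ 2) = \<kappa> s * (\<tau> s * (e1 s \<bullet> d) + \<kappa> s * (e3 s \<bullet> d))"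
    using s by (simp_all add: algebra_simps power2_eq_square)
  have "(\<lambda>t. \<tau> t * (e3 t \<bullet> d) - \<kappa> t * (e1 t \<bullet> d)) constant_on I"
    using h0 unfolding constant_on_def by force
  from has_real_derivative_zero_if_constant_on[OF open_I s this
      DERIV_diff[OF DERIV_mult'[OF has_real_derivative_\<tau> has_real_derivative_frame_coordinates(3)]
        DERIV_mult'[OF has_real_derivative_\<kappa> has_real_derivative_frame_coordinates(1)]]]
  show "\<tau>' s * (e3 s \<bullet> d) - \<kappa>' s * (e1 s \<bullet> d) = (\<kappa> s ^ 2 + \<tau> s ^ 2) * c"
    using s c[OF s] by (simp add: algebra_simps power2_eq_square)
qed

lemma constant_on_darboux_component:
  assumes c: "\<And>s. s \<in> I \<Longrightarrow> e2 s \<bullet> d = c"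
  shows "(\<lambda>t. (\<tau> t * (e1 t \<bullet> d) + \<kappa> t * (e3 t \<bullet> d)) / sqrt (\<kappa> t ^ 2 + \<tau> t ^ 2)) constant_on I"
proof (rule constant_on_if_has_real_derivative_0)
  fix s assume s: "s \<in> I"
  define q where "q t = sqrt (\<kappa> t ^ 2 + \<tau> t ^ 2)" for t
  define P where "P t = \<tau> t * (e1 t \<bullet> d) + \<kappa> t * (e3 t \<bullet> d)" for t
  have q_pos: "q s > 0" and q_sq: "q s * q s = \<kappa> s ^ 2 + \<tau> s ^ 2"
    using sum_squares_curvatures_pos[OF s] by (simp_all add: q_def)
  have "((\<lambda>t. P t / q t) has_real_derivative
      ((\<tau> s * (\<kappa> s * (e2 s \<bullet> d)) + \<tau>' s * (e1 s \<bullet> d)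
         + (\<kappa> s * (- \<tau> s * (e2 s \<bullet> d)) + \<kappa>' s * (e3 s \<bullet> d))) * q s
       - P s * ((\<kappa> s * \<kappa>' s + \<tau> s * \<tau>' s) / q s)) / (q s * q s)) (at s)"
    unfolding P_def q_def
    by (intro DERIV_divide DERIV_add DERIV_mult' has_real_derivative_\<kappa> has_real_derivative_\<tau>
        has_real_derivative_frame_coordinates has_real_derivative_norm_curvatures s)
      (use nondegenerate[OF s] in simp)
  moreover have "(\<tau>' s * (e1 s \<bullet> d) + \<kappa>' s * (e3 s \<bullet> d)) * (q s * q s)
      = P s * (\<kappa> s * \<kappa>' s + \<tau> s * \<tau>' s)"
    using principal_normal_axis_coordinates(1,2)[OF c s] unfolding q_sq P_def by algebra
  ultimately have "((\<lambda>t. P t / q t) has_real_derivative 0) (at s)"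
    using q_pos by (simp add: field_simps)
  then show "((\<lambda>t. (\<tau> t * (e1 t \<bullet> d) + \<kappa> t * (e3 t \<bullet> d)) / sqrt (\<kappa> t ^ 2 + \<tau> t ^ 2))
      has_real_derivative 0) (at s)"
    unfolding P_def q_def .
qed

lemma constant_on_if_v_helix_principal_normal:
  assumes "v_helix I e2"
  shows "(\<lambda>s. (\<tau>' s * \<kappa> s - \<tau> s * \<kappa>' s) / ((\<kappa> s ^ 2 + \<tau> s ^ 2) * sqrt (\<kappa> s ^ 2 + \<tau> s ^ 2)))
           constant_on I"
proof -
  obtain d c where "d \<noteq> 0" and c: "\<And>s. s \<in> I \<Longrightarrow> e2 s \<bullet> d = c"
    using assms unfolding v_helix_iff_constant_on constant_on_def by blast
  define q where "q t = sqrt (\<kappa> t ^ 2 + \<tau> t ^ 2)" for t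
  define P where "P t = \<tau> t * (e1 t \<bullet> d) + \<kappa> t * (e3 t \<bullet> d)" for t
  obtain b where b: "\<And>s. s \<in> I \<Longrightarrow> P s / q s = b"
    using constant_on_darboux_component[OF c] unfolding constant_on_def P_def q_def by blast
  have "(\<tau>' s * \<kappa> s - \<tau> s * \<kappa>' s) / ((\<kappa> s ^ 2 + \<tau> s ^ 2) * q s) = c / b" if s: "s \<in> I" for s
  proof -
    note coordinates = principal_normal_axis_coordinates[OF c s, folded P_def]
    have q_pos: "q s > 0" and q_sq: "q s * q s = \<kappa> s ^ 2 + \<tau> s ^ 2"
      using sum_squares_curvatures_pos[OF s] by (simp_all add: q_def)
    have P_eq: "P s = b * q s"
      using b[OF s] q_pos by (simp add: field_simps)
    have "b \<noteq> 0"
    proof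
      assume "b = 0"
      then have "e1 s \<bullet> d = 0" "e3 s \<bullet> d = 0"
        using P_eq coordinates(1,2) nondegenerate[OF s] by auto
      moreover from this have "c = 0"
        using coordinates(3) nondegenerate[OF s] by auto
      ultimately show False
        using frame_coordinates_eq_0[OF s] c[OF s] \<open>d \<noteq> 0\<close> by auto
    qed
    have "(\<tau>' s * \<kappa> s - \<tau> s * \<kappa>' s) * b * q s = (\<kappa> s ^ 2 + \<tau> s ^ 2) * q s * c * q s"
      using coordinates P_eq q_sq by algebra
    then have "(\<tau>' s * \<kappa> s - \<tau> s * \<kappa>' s) * b = (\<kappa> s ^ 2 + \<tau> s ^ 2) * q s * c"
      using q_pos by simp
    moreover have "(\<kappa> s ^ 2 + \<tau> s ^ 2) * q s \<noteq> 0"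
      using q_pos nondegenerate[OF s] by auto
    ultimately show ?thesis
      using \<open>b \<noteq> 0\<close> by (simp add: frac_eq_eq ac_simps)
  qed
  then show ?thesis
    unfolding constant_on_def q_def by blast
qed

lemma constant_on_principal_normal_axis:
  assumes k_eq: "\<And>s. s \<in> I \<Longrightarrow>
    (\<tau>' s * \<kappa> s - \<tau> s * \<kappa>' s) / ((\<kappa> s ^ 2 + \<tau> s ^ 2) * sqrt (\<kappa> s ^ 2 + \<tau> s ^ 2)) = k"
  shows "(\<lambda>t. k *\<^sub>R e2 t + (1 / sqrt (\<kappa> t ^ 2 + \<tau> t ^ 2)) *\<^sub>R (\<tau> t *\<^sub>R e1 t + \<kappa> t *\<^sub>R e3 t))
           constant_on I"
proof -
  define q where "q t = sqrt (\<kappa> t ^ 2 + \<tau> t ^ 2)" for t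
  define F where "F t = k *\<^sub>R e2 t + (1 / q t) *\<^sub>R (\<tau> t *\<^sub>R e1 t + \<kappa> t *\<^sub>R e3 t)" for t
  have F_inner: "F t \<bullet> e = k * (e2 t \<bullet> e) + (\<tau> t * (e1 t \<bullet> e) + \<kappa> t * (e3 t \<bullet> e)) / q t" for t e
    by (simp add: F_def inner_add_left add_divide_distrib)
  have "F constant_on I"
  proof (rule constant_on_if_inner_constant_on, rule constant_on_if_has_real_derivative_0)
    fix e s assume s: "s \<in> I"
    have q_pos: "q s > 0" and q_sq: "q s * q s = \<kappa> s ^ 2 + \<tau> s ^ 2"
      using sum_squares_curvatures_pos[OF s] by (simp_all add: q_def)
    have q_deriv: "(q has_real_derivative (\<kappa> s * \<kappa>' s + \<tau> s * \<tau>' s) / q s) (at s)"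
      using has_real_derivative_norm_curvatures[OF s] by (simp add: q_def[abs_def])
    have "(\<tau>' s * \<kappa> s - \<tau> s * \<kappa>' s) / (q s * q s * q s) = k"
      using k_eq[OF s] unfolding q_sq q_def[symmetric] .
    then have k: "\<tau>' s * \<kappa> s - \<tau> s * \<kappa>' s = k * (q s * q s * q s)"
      using q_pos by (simp add: nonzero_divide_eq_eq)
    have "((\<lambda>t. k * (e2 t \<bullet> e) + (\<tau> t * (e1 t \<bullet> e) + \<kappa> t * (e3 t \<bullet> e)) / q t) has_real_derivative
        k * (\<tau> s * (e3 s \<bullet> e) - \<kappa> s * (e1 s \<bullet> e))
        + ((\<tau> s * (\<kappa> s * (e2 s \<bullet> e)) + \<tau>' s * (e1 s \<bullet> e)
            + (\<kappa> s * (- \<tau> s * (e2 s \<bullet> e)) + \<kappa>' s * (e3 s \<bullet> e))) * q s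
           - (\<tau> s * (e1 s \<bullet> e) + \<kappa> s * (e3 s \<bullet> e)) * ((\<kappa> s * \<kappa>' s + \<tau> s * \<tau>' s) / q s))
          / (q s * q s)) (at s)"
      by (intro DERIV_add DERIV_cmult DERIV_divide DERIV_mult' has_real_derivative_\<kappa>
          has_real_derivative_\<tau> has_real_derivative_frame_coordinates q_deriv s)
        (use q_pos in simp)
    moreover have "k * (q s * q s * q s) * (\<tau> s * (e3 s \<bullet> e) - \<kappa> s * (e1 s \<bullet> e))
        + (\<tau>' s * (e1 s \<bullet> e) + \<kappa>' s * (e3 s \<bullet> e)) * (q s * q s)
        - (\<tau> s * (e1 s \<bullet> e) + \<kappa> s * (e3 s \<bullet> e)) * (\<kappa> s * \<kappa>' s + \<tau> s * \<tau>' s) = 0"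
      using k q_sq by algebra
    ultimately show "((\<lambda>t. F t \<bullet> e) has_real_derivative 0) (at s)"
      using q_pos by (simp add: F_inner field_simps)
  qed
  then show ?thesis
    unfolding F_def q_def .
qed

lemma v_helix_principal_normal_if_constant_on:
  assumes "(\<lambda>s. (\<tau>' s * \<kappa> s - \<tau> s * \<kappa>' s) / ((\<kappa> s ^ 2 + \<tau> s ^ 2) * sqrt (\<kappa> s ^ 2 + \<tau> s ^ 2)))
             constant_on I"
  shows "v_helix I e2"
proof -
  obtain k where "\<And>s. s \<in> I \<Longrightarrow>
      (\<tau>' s * \<kappa> s - \<tau> s * \<kappa>' s) / ((\<kappa> s ^ 2 + \<tau> s ^ 2) * sqrt (\<kappa> s ^ 2 + \<tau> s ^ 2)) = k"
    using assms unfolding constant_on_def by blast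
  from constant_on_principal_normal_axis[OF this]
  obtain d where d: "\<And>s. s \<in> I \<Longrightarrow>
      k *\<^sub>R e2 s + (1 / sqrt (\<kappa> s ^ 2 + \<tau> s ^ 2)) *\<^sub>R (\<tau> s *\<^sub>R e1 s + \<kappa> s *\<^sub>R e3 s) = d"
    unfolding constant_on_def by blast
  obtain s0 where s0: "s0 \<in> I"
    using nonempty_I by blast
  have "e1 s0 \<bullet> d = \<tau> s0 / sqrt (\<kappa> s0 ^ 2 + \<tau> s0 ^ 2)" "e3 s0 \<bullet> d = \<kappa> s0 / sqrt (\<kappa> s0 ^ 2 + \<tau> s0 ^ 2)"
    using d[OF s0, symmetric] inner_frame[OF s0] by (simp_all add: inner_add_right)
  then have "d \<noteq> 0"
    using nondegenerate[OF s0] by auto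
  moreover have "e2 s \<bullet> d = k" if "s \<in> I" for s
    using d[OF that, symmetric] inner_frame[OF that] by (simp add: inner_add_right)
  ultimately show "v_helix I e2"
    unfolding v_helix_iff_constant_on constant_on_def by blast
qed

theorem v_helix_principal_normal_iff:
  "v_helix I e2 \<longleftrightarrow>
     (\<lambda>s. (\<tau>' s * \<kappa> s - \<tau> s * \<kappa>' s) / (\<kappa> s ^ 2 + \<tau> s ^ 2) powr (3/2)) constant_on I"
proof -
  have "(\<kappa> s ^ 2 + \<tau> s ^ 2) powr (3/2) = (\<kappa> s ^ 2 + \<tau> s ^ 2) * sqrt (\<kappa> s ^ 2 + \<tau> s ^ 2)" for s
    by (simp add: powr_three_halves)
  then show ?thesis
    using constant_on_if_v_helix_principal_normal v_helix_principal_normal_if_constant_on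
    by (simp only:) blast
qed

end

end

lemma myller_configuration_interval:
  "myller_configuration I C xi mu v G K T \<Longrightarrow> open I \<and> connected I \<and> I \<noteq> {}"
  unfolding myller_configuration_def by (auto intro: is_interval_connected)

lemma myller_configuration_has_vector_derivative:
  assumes "myller_configuration I C xi mu v G K T" "s \<in> I"
  shows "(xi has_vector_derivative G s *\<^sub>R mu s + K s *\<^sub>R v s) (at s)"
    "(mu has_vector_derivative - G s *\<^sub>R xi s + T s *\<^sub>R v s) (at s)"
    "(v has_vector_derivative - K s *\<^sub>R xi s - T s *\<^sub>R mu s) (at s)"
  using assms unfolding myller_configuration_def by auto

lemma myller_configuration_orthonormal:
  assumes "myller_configuration I C xi mu v G K T" "s \<in> I"
  shows "norm (xi s) = 1 \<and> norm (mu s) = 1 \<and> norm (v s) = 1 \<and>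
    xi s \<bullet> mu s = 0 \<and> xi s \<bullet> v s = 0 \<and> mu s \<bullet> v s = 0"
proof -
  have frame: "norm (xi s) = 1" "norm (v s) = 1" "xi s \<bullet> v s = 0" "mu s = cross3 (v s) (xi s)"
    using assms unfolding myller_configuration_def by auto
  then have "(norm (mu s))\<^sup>2 = 1"
    using norm_cross_dot[of "v s" "xi s"] by (simp add: inner_commute)
  then have "norm (mu s) = 1"
    using norm_ge_zero[of "mu s"] by (auto simp: power2_eq_1_iff)
  then show ?thesis
    using frame dot_cross_self(2,4) by simp
qed

lemma myller_configuration_has_real_derivative_invariants:
  assumes M: "myller_configuration I C xi mu v G K T" and s: "s \<in> I"
  shows "(T has_real_derivative deriv T s) (at s)" "(K has_real_derivative deriv K s) (at s)"
proof -
  have "smooth_on I v"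
    using M unfolding myller_configuration_def by blast
  then obtain D where "D 0 = v" and D: "\<And>n t. t \<in> I \<Longrightarrow> (D n has_vector_derivative D (Suc n) t) (at t)"
    unfolding smooth_on_def by blast
  have "D 1 t = - K t *\<^sub>R xi t - T t *\<^sub>R mu t" if "t \<in> I" for t
  proof (rule vector_derivative_unique_at)
    show "(v has_vector_derivative D 1 t) (at t)"
      using D[OF that, of 0] \<open>D 0 = v\<close> by simp
    show "(v has_vector_derivative - K t *\<^sub>R xi t - T t *\<^sub>R mu t) (at t)"
      by (rule myller_configuration_has_vector_derivative(3)[OF M that])
  qed
  then have T_eq: "T t = - (D 1 t \<bullet> mu t)" and K_eq: "K t = - (D 1 t \<bullet> xi t)" if "t \<in> I" for t
    using myller_configuration_orthonormal[OF M that] that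
    by (simp_all add: inner_diff_right dot_square_norm inner_commute)
  have differentiable: "\<exists>X. ((\<lambda>t. - (D 1 t \<bullet> w t)) has_real_derivative X) (at s)"
    if "(w has_vector_derivative w') (at s)" for w w'
    using DERIV_minus[OF has_real_derivative_inner[OF D[OF s, of 1] that]] by blast
  obtain X Y where "((\<lambda>t. - (D 1 t \<bullet> mu t)) has_real_derivative X) (at s)"
      "((\<lambda>t. - (D 1 t \<bullet> xi t)) has_real_derivative Y) (at s)"
    using differentiable myller_configuration_has_vector_derivative(1,2)[OF M s] by meson
  then have "(T has_real_derivative X) (at s)" "(K has_real_derivative Y) (at s)"
    using has_field_derivative_transform_within_open[OF _ _ s] myller_configuration_interval[OF M]
      T_eq K_eq
    by auto
  then show "(T has_real_derivative deriv T s) (at s)" "(K has_real_derivative deriv K s) (at s)"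
    using DERIV_imp_deriv by fastforce+
qed

lemma frenet_frame_if_normal_curvature_zero:
  assumes M: "myller_configuration I C xi mu v G K T" and K0: "\<forall>s\<in>I. K s = 0"
  shows "frenet_frame I xi mu v G T"
proof
  show "open I" "connected I" "I \<noteq> {}"
    using myller_configuration_interval[OF M] by auto
  fix s assume s: "s \<in> I"
  note D = myller_configuration_has_vector_derivative[OF M s]
  show "norm (xi s) = 1 \<and> norm (mu s) = 1 \<and> norm (v s) = 1 \<and>
      xi s \<bullet> mu s = 0 \<and> xi s \<bullet> v s = 0 \<and> mu s \<bullet> v s = 0"
    by (rule myller_configuration_orthonormal[OF M s])
  show "(xi has_vector_derivative G s *\<^sub>R mu s) (at s)"
    using D(1) K0 s by simp
  show "(mu has_vector_derivative T s *\<^sub>R v s - G s *\<^sub>R xi s) (at s)"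
    using D(2) by (simp add: algebra_simps)
  show "(v has_vector_derivative - T s *\<^sub>R mu s) (at s)"
    using D(3) K0 s by simp
qed

lemma frenet_frame_if_geodesic_curvature_zero:
  assumes M: "myller_configuration I C xi mu v G K T" and G0: "\<forall>s\<in>I. G s = 0"
  shows "frenet_frame I xi v (\<lambda>t. - mu t) K T"
proof
  show "open I" "connected I" "I \<noteq> {}"
    using myller_configuration_interval[OF M] by auto
  fix s assume s: "s \<in> I"
  note D = myller_configuration_has_vector_derivative[OF M s]
  show "norm (xi s) = 1 \<and> norm (v s) = 1 \<and> norm (- mu s) = 1 \<and>
      xi s \<bullet> v s = 0 \<and> xi s \<bullet> - mu s = 0 \<and> v s \<bullet> - mu s = 0"
    using myller_configuration_orthonormal[OF M s] by (simp add: inner_commute)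
  show "(xi has_vector_derivative K s *\<^sub>R v s) (at s)"
    using D(1) G0 s by simp
  show "(v has_vector_derivative T s *\<^sub>R - mu s - K s *\<^sub>R xi s) (at s)"
    by (rule has_vector_derivative_eq_rhs[OF D(3)]) (simp add: algebra_simps)
  show "((\<lambda>t. - mu t) has_vector_derivative - T s *\<^sub>R v s) (at s)"
    using has_vector_derivative_minus[OF D(2)] G0 s by simp
qed

lemma frenet_frame_if_geodesic_torsion_zero:
  assumes M: "myller_configuration I C xi mu v G K T" and T0: "\<forall>s\<in>I. T s = 0"
  shows "frenet_frame I mu (\<lambda>t. - xi t) v G (\<lambda>t. - K t)"
proof
  show "open I" "connected I" "I \<noteq> {}"
    using myller_configuration_interval[OF M] by auto
  fix s assume s: "s \<in> I"
  note D = myller_configuration_has_vector_derivative[OF M s]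
  show "norm (mu s) = 1 \<and> norm (- xi s) = 1 \<and> norm (v s) = 1 \<and>
      mu s \<bullet> - xi s = 0 \<and> mu s \<bullet> v s = 0 \<and> - xi s \<bullet> v s = 0"
    using myller_configuration_orthonormal[OF M s] by (simp add: inner_commute)
  show "(mu has_vector_derivative G s *\<^sub>R - xi s) (at s)"
    using D(2) T0 s by simp
  show "((\<lambda>t. - xi t) has_vector_derivative - K s *\<^sub>R v s - G s *\<^sub>R mu s) (at s)"
    by (rule has_vector_derivative_eq_rhs[OF has_vector_derivative_minus[OF D(1)]])
      (simp add: algebra_simps)
  show "(v has_vector_derivative - (- K s) *\<^sub>R - xi s) (at s)"
    using D(3) T0 s by simp
qed

theorem corollary26:
  fixes I :: "real set" and C xi mu v :: "real \<Rightarrow> real^3" and G K T :: "real \<Rightarrow> real"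
  assumes M: "myller_configuration I C xi mu v G K T"
    and nondeg: "\<forall>s\<in>I. (T s, K s) \<noteq> (0, 0)"
  shows "((\<forall>s\<in>I. K s = 0) \<longrightarrow>
            (v_helix I v \<longleftrightarrow> (\<exists>c. \<forall>s\<in>I. - (G s / T s) = c)))
       \<and> ((\<forall>s\<in>I. G s = 0) \<longrightarrow>
            (v_helix I v \<longleftrightarrow>
              (\<exists>c. \<forall>s\<in>I. - ((deriv T s * K s - T s * deriv K s)
                                 / (T s ^ 2 + K s ^ 2) powr (3/2)) = c)))
       \<and> ((\<forall>s\<in>I. T s = 0) \<longrightarrow>
            (v_helix I v \<longleftrightarrow> (\<exists>c. \<forall>s\<in>I. - (G s / K s) = c)))"
proof (intro conjI impI)
  assume K0: "\<forall>s\<in>I. K s = 0"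
  have "v_helix I v \<longleftrightarrow> (\<lambda>s. G s / T s) constant_on I"
    using frenet_frame.v_helix_binormal_iff[OF frenet_frame_if_normal_curvature_zero[OF M K0]]
      K0 nondeg by auto
  then show "v_helix I v \<longleftrightarrow> (\<exists>c. \<forall>s\<in>I. - (G s / T s) = c)"
    using constant_on_uminus_iff[of "\<lambda>s. G s / T s" I] unfolding constant_on_def by blast
next
  assume G0: "\<forall>s\<in>I. G s = 0"
  have "v_helix I v \<longleftrightarrow>
      (\<lambda>s. (deriv T s * K s - T s * deriv K s) / (K s ^ 2 + T s ^ 2) powr (3/2)) constant_on I"
    by (rule frenet_frame.v_helix_principal_normal_iff[OF frenet_frame_if_geodesic_curvature_zero[OF M G0]])
      (use nondeg myller_configuration_has_real_derivative_invariants[OF M] in auto)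
  then have "v_helix I v \<longleftrightarrow>
      (\<lambda>s. - ((deriv T s * K s - T s * deriv K s) / (T s ^ 2 + K s ^ 2) powr (3/2))) constant_on I"
    by (simp add: constant_on_uminus_iff add.commute)
  then show "v_helix I v \<longleftrightarrow>
      (\<exists>c. \<forall>s\<in>I. - ((deriv T s * K s - T s * deriv K s) / (T s ^ 2 + K s ^ 2) powr (3/2)) = c)"
    unfolding constant_on_def .
next
  assume T0: "\<forall>s\<in>I. T s = 0"
  have "v_helix I v \<longleftrightarrow> (\<lambda>s. G s / - K s) constant_on I"
    using frenet_frame.v_helix_binormal_iff[OF frenet_frame_if_geodesic_torsion_zero[OF M T0]]
      T0 nondeg by auto
  then show "v_helix I v \<longleftrightarrow> (\<exists>c. \<forall>s\<in>I. - (G s / K s) = c)"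
    unfolding constant_on_def by simp
qed

end
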